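(* There is a constant $C_d$ depending only on $d$ such that the following holds. Let $B\subset\mathbb{R}^d$ be an open ball of radius $r$, let $\tilde B$ be the ball with the same center and radius $2r$, let $\mathbf f=(f_1,\dots,f_n)\in C^2(\tilde B)$, let $\delta>0$, and let $$L=\sup_{|\beta|=2,\ x\in\tilde B}\|\partial_\beta\mathbf f(x)\|,$$ assumed finite and positive. Then for every $\mathbf q\in\mathbb{Z}^n$ with $\|\mathbf q\|\ge\frac{1}{4nLr^2}$, the set of $x\in B$ satisfying both $$\langle\!\langle\mathbf f(x)\mathbf q\rangle\!\rangle<\delta\qquad\text{and}\qquad\|\nabla\mathbf f(x)\mathbf q\|\ge\sqrt{ndL\|\mathbf q\|}$$ has Lebesgue measure at most $C_d\,\delta\,|B|$.
   Context: $\mathbf f(x)$ is a row vector and $\mathbf q$ a column vector, $\mathbf f(x)\mathbf q=\sum_iq_if_i(x)$. $\nabla\mathbf f(x)$ denotes the $d\times n$ matrix whose rows are the partial derivatives $\partial_i\mathbf f(x)$, so $\nabla\mathbf f(x)\mathbf q\in\mathbb{R}^d$ is the gradient of $x\mapsto\mathbf f(x)\mathbf q$. All norms are sup-norms: $\|\mathbf v\|=\max_i|v_i|$. $\langle\!\langle t\rangle\!\rangle$ is the distance from $t$ to the nearest integer. $|\cdot|$ is Lebesgue measure. For a multiindex $\beta$, $|\beta|$ is its order and $\partial_\beta$ the corresponding partial derivative. *)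

theory Defs
  imports "HOL-Analysis.Analysis"
begin

definition dist_int :: "real \<Rightarrow> real" where
  "dist_int t = min (t - of_int \<lfloor>t\<rfloor>) (of_int \<lceil>t\<rceil> - t)"

definition partial :: "'d::finite \<Rightarrow> (real^'d \<Rightarrow> real) \<Rightarrow> real^'d \<Rightarrow> real" where
  "partial j g x = frechet_derivative g (at x) (axis j 1)"

definition C2_on :: "(real^'d::finite) set \<Rightarrow> (real^'d \<Rightarrow> real) \<Rightarrow> bool" where
  "C2_on S g \<longleftrightarrow>
     (\<forall>x\<in>S. g differentiable (at x)) \<and>
     (\<forall>j. \<forall>x\<in>S. (partial j g) differentiable (at x)) \<and>
     (\<forall>j k. continuous_on S (partial k (partial j g)))"

definition qnorm :: "nat \<Rightarrow> (nat \<Rightarrow> int) \<Rightarrow> real" where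
  "qnorm n q = Max {\<bar>real_of_int (q i)\<bar> | i. i < n}"

definition grad_norm :: "nat \<Rightarrow> (nat \<Rightarrow> real^'d::finite \<Rightarrow> real) \<Rightarrow> (nat \<Rightarrow> int) \<Rightarrow> real^'d \<Rightarrow> real" where
  "grad_norm n f q x = Max (range (\<lambda>j. \<bar>\<Sum>i<n. real_of_int (q i) * partial j (f i) x\<bar>))"

end

theory Submission
  imports Defs
begin

(* Write g = f q and K = n L ||q||, so that every second derivative of g along a coordinate
   direction e_j is bounded by K on the doubled ball. On a segment of half-length
   h = 1 / (2 sqrt K) in direction e_j around a point where |d_j g| >= sqrt K, the derivative of g
   along the segment stays between 1/2 and 3/2 of its value at the centre; so g is bi-Lipschitz
   there and comes delta-close to an integer only on a set of measure O(delta h). The lower bound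
   on ||q|| gives h <= r, so O(r / h) segments bound every line section of B by O(delta r).
   Fubini along e_j turns this into O(delta |B|) for the points where |d_j g| is large, and the
   d coordinate directions cover the whole exceptional set. *)

(* Line sections of the exceptional set are only ever covered, never shown measurable. *)
definition outer_measure_le :: "'a::euclidean_space set \<Rightarrow> real \<Rightarrow> bool" where
  "outer_measure_le S b \<longleftrightarrow> (\<exists>W\<in>sets lborel. S \<subseteq> W \<and> emeasure lborel W \<le> ennreal b)"

lemma outer_measure_le_mono:
  "outer_measure_le T b \<Longrightarrow> S \<subseteq> T \<Longrightarrow> b \<le> b' \<Longrightarrow> outer_measure_le S b'"
  unfolding outer_measure_le_def by (meson ennreal_leI order.trans)

lemma outer_measure_le_empty: "outer_measure_le {} b"
  unfolding outer_measure_le_def by (intro bexI[of _ "{}"]) auto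

lemma outer_measure_le_UN:
  assumes "finite I" and "\<And>i. i \<in> I \<Longrightarrow> outer_measure_le (A i) b"
  shows "outer_measure_le (\<Union>i\<in>I. A i) (real (card I) * b)"
proof -
  obtain W where W: "\<And>i. i \<in> I \<Longrightarrow> W i \<in> sets lborel \<and> A i \<subseteq> W i \<and> emeasure lborel (W i) \<le> ennreal b"
    using assms(2) unfolding outer_measure_le_def by metis
  have "emeasure lborel (\<Union>i\<in>I. W i) \<le> (\<Sum>i\<in>I. emeasure lborel (W i))"
    using W by (intro emeasure_subadditive_finite assms(1)) auto
  also have "\<dots> \<le> (\<Sum>i\<in>I. ennreal b)"
    using W by (intro sum_mono) auto
  also have "\<dots> = ennreal (real (card I) * b)"
    by (simp add: ennreal_mult' ennreal_of_nat_eq_real_of_nat)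
  finally show ?thesis
    unfolding outer_measure_le_def using W assms(1) by (intro bexI[of _ "\<Union>i\<in>I. W i"]) auto
qed

lemma outer_measure_le_diameter:
  fixes S :: "real set"
  assumes "\<And>s t. s \<in> S \<Longrightarrow> t \<in> S \<Longrightarrow> \<bar>s - t\<bar> \<le> \<rho>"
  shows "outer_measure_le S (2 * \<rho>)"
proof (cases "S = {}")
  case False
  then obtain s where s: "s \<in> S" by auto
  have "\<rho> \<ge> 0"
    using assms[of s s] s by simp
  moreover have "S \<subseteq> {s - \<rho>..s + \<rho>}"
    using assms s by (fastforce simp: abs_le_iff)
  ultimately show ?thesis
    unfolding outer_measure_le_def by (intro bexI[of _ "{s - \<rho>..s + \<rho>}"]) auto
qed (simp add: outer_measure_le_empty)

lemma dist_int_lt_imp_near_int: "dist_int t < d \<Longrightarrow> \<exists>k::int. \<bar>t - of_int k\<bar> < d"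
  unfolding dist_int_def
  by (metis abs_of_nonneg abs_minus_commute diff_ge_0_iff_ge ceiling_correct min_less_iff_disj of_int_floor_le)

lemma dist_int_measurable [measurable]: "dist_int \<in> borel_measurable borel"
  unfolding dist_int_def[abs_def] by measurable

lemma outer_measure_le_near_int:
  fixes \<phi> :: "real \<Rightarrow> real"
  assumes m: "m > 0" and R: "R \<ge> 0" and \<delta>: "\<delta> > 0"
    and sep: "\<And>s t. s \<in> I \<Longrightarrow> t \<in> I \<Longrightarrow> m * \<bar>s - t\<bar> \<le> \<bar>\<phi> s - \<phi> t\<bar>"
    and range: "\<And>s. s \<in> I \<Longrightarrow> \<bar>\<phi> s - y\<bar> \<le> R"
  shows "outer_measure_le {s \<in> I. dist_int (\<phi> s) < \<delta>} ((2 * R + 2 * \<delta> + 3) * (4 * \<delta> / m))"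
proof -
  define A where "A k = {s \<in> I. \<bar>\<phi> s - of_int k\<bar> < \<delta>}" for k :: int
  define ks where "ks = {\<lfloor>y - R - \<delta>\<rfloor>..\<lceil>y + R + \<delta>\<rceil>}"
  have "{s \<in> I. dist_int (\<phi> s) < \<delta>} \<subseteq> (\<Union>k\<in>ks. A k)"
  proof
    fix s assume "s \<in> {s \<in> I. dist_int (\<phi> s) < \<delta>}"
    then obtain k where s: "s \<in> I" "\<bar>\<phi> s - of_int k\<bar> < \<delta>"
      using dist_int_lt_imp_near_int by blast
    then have "k \<in> ks"
      using range[of s] unfolding ks_def by (auto simp: floor_le_iff le_ceiling_iff)
    then show "s \<in> (\<Union>k\<in>ks. A k)"
      using s unfolding A_def by blast
  qed
  moreover have "outer_measure_le (A k) (2 * (2 * \<delta> / m))" for k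
  proof (rule outer_measure_le_diameter)
    fix s t assume "s \<in> A k" "t \<in> A k"
    then have "s \<in> I" "t \<in> I" "\<bar>\<phi> s - of_int k\<bar> < \<delta>" "\<bar>\<phi> t - of_int k\<bar> < \<delta>"
      unfolding A_def by auto
    then have "m * \<bar>s - t\<bar> < 2 * \<delta>"
      using sep[of s t] by linarith
    then show "\<bar>s - t\<bar> \<le> 2 * \<delta> / m"
      using m by (simp add: field_simps)
  qed
  then have "outer_measure_le (\<Union>k\<in>ks. A k) (real (card ks) * (4 * \<delta> / m))"
    unfolding ks_def by (intro outer_measure_le_UN) auto
  moreover have "real (card ks) * (4 * \<delta> / m) \<le> (2 * R + 2 * \<delta> + 3) * (4 * \<delta> / m)"
  proof (rule mult_right_mono)
    have "real_of_int \<lfloor>y - R - \<delta>\<rfloor> \<le> of_int \<lceil>y + R + \<delta>\<rceil>"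
      using R \<delta> of_int_floor_le[of "y - R - \<delta>"] le_of_int_ceiling[of "y + R + \<delta>"] by linarith
    then have "\<lfloor>y - R - \<delta>\<rfloor> \<le> \<lceil>y + R + \<delta>\<rceil>"
      by linarith
    then have "real (card ks) = of_int (\<lceil>y + R + \<delta>\<rceil> - \<lfloor>y - R - \<delta>\<rfloor> + 1)"
      unfolding ks_def by simp
    then show "real (card ks) \<le> 2 * R + 2 * \<delta> + 3"
      using floor_correct[of "y - R - \<delta>"] ceiling_correct[of "y + R + \<delta>"] by linarith
  qed (use m \<delta> in simp)
  ultimately show ?thesis
    by (meson outer_measure_le_mono)
qed

lemma MVT_abs_diff:
  fixes \<phi> \<phi>' :: "real \<Rightarrow> real"
  assumes der: "\<And>s. s \<in> {lo..hi} \<Longrightarrow> (\<phi> has_real_derivative \<phi>' s) (at s)"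
    and "s \<in> {lo..hi}" "t \<in> {lo..hi}"
  shows "\<exists>z\<in>{lo..hi}. \<bar>\<phi> s - \<phi> t\<bar> = \<bar>\<phi>' z\<bar> * \<bar>s - t\<bar>"
proof -
  have *: "\<exists>z\<in>{lo..hi}. \<bar>\<phi> b - \<phi> a\<bar> = \<bar>\<phi>' z\<bar> * \<bar>b - a\<bar>"
    if "a \<in> {lo..hi}" "b \<in> {lo..hi}" "a < b" for a b
  proof -
    have "\<And>x. a \<le> x \<Longrightarrow> x \<le> b \<Longrightarrow> (\<phi> has_real_derivative \<phi>' x) (at x)"
      using der that by auto
    then obtain z where "a < z" "z < b" "\<phi> b - \<phi> a = (b - a) * \<phi>' z"
      using MVT2[OF \<open>a < b\<close>, of \<phi> \<phi>'] by blast
    then show ?thesis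
      using that by (intro bexI[of _ z]) (auto simp: abs_mult)
  qed
  show ?thesis
    using *[of s t] *[of t s] assms(2,3) by (cases s t rule: linorder_cases) (auto simp: abs_minus_commute)
qed

lemma abs_diff_bounds_by_deriv:
  fixes \<phi> \<phi>' :: "real \<Rightarrow> real"
  assumes der: "\<And>s. s \<in> {lo..hi} \<Longrightarrow> (\<phi> has_real_derivative \<phi>' s) (at s)"
    and bounds: "\<And>s. s \<in> {lo..hi} \<Longrightarrow> m \<le> \<bar>\<phi>' s\<bar> \<and> \<bar>\<phi>' s\<bar> \<le> M"
    and "s \<in> {lo..hi}" "t \<in> {lo..hi}"
  shows "m * \<bar>s - t\<bar> \<le> \<bar>\<phi> s - \<phi> t\<bar> \<and> \<bar>\<phi> s - \<phi> t\<bar> \<le> M * \<bar>s - t\<bar>"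
proof -
  obtain z where z: "z \<in> {lo..hi}" "\<bar>\<phi> s - \<phi> t\<bar> = \<bar>\<phi>' z\<bar> * \<bar>s - t\<bar>"
    using MVT_abs_diff[where lo = lo and hi = hi, OF der assms(3,4)] by blast
  then show ?thesis
    using bounds[OF z(1)] by (auto intro: mult_right_mono)
qed

lemma abs_deriv_bounds_near_steep:
  fixes \<phi>' :: "real \<Rightarrow> real"
  assumes K: "K > 0" and h: "h = 1 / (2 * sqrt K)"
    and lip: "\<And>s. s \<in> {t-h..t+h} \<Longrightarrow> \<bar>\<phi>' s - \<phi>' t\<bar> \<le> K * \<bar>s - t\<bar>"
    and steep: "sqrt K \<le> \<bar>\<phi>' t\<bar>" and s: "s \<in> {t-h..t+h}"
  shows "\<bar>\<phi>' t\<bar> / 2 \<le> \<bar>\<phi>' s\<bar> \<and> \<bar>\<phi>' s\<bar> \<le> 3 * \<bar>\<phi>' t\<bar> / 2"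
proof -
  have "K * \<bar>s - t\<bar> \<le> K * h"
    using s K by (intro mult_left_mono) auto
  also have "\<dots> = sqrt K / 2"
    using K by (simp add: h real_div_sqrt)
  finally show ?thesis
    using lip[OF s] steep by linarith
qed

lemma outer_measure_le_near_int_local:
  fixes \<phi> \<phi>' :: "real \<Rightarrow> real"
  assumes K: "K > 0" and h: "h = 1 / (2 * sqrt K)" and \<delta>: "\<delta> > 0"
    and der: "\<And>s. s \<in> {t-h..t+h} \<Longrightarrow> (\<phi> has_real_derivative \<phi>' s) (at s)"
    and lip: "\<And>s. s \<in> {t-h..t+h} \<Longrightarrow> \<bar>\<phi>' s - \<phi>' t\<bar> \<le> K * \<bar>s - t\<bar>"
    and steep: "sqrt K \<le> \<bar>\<phi>' t\<bar>"
  shows "outer_measure_le {s \<in> {t-h..t+h}. dist_int (\<phi> s) < \<delta>} (104 * \<delta> * h)"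
proof -
  define a where "a = \<bar>\<phi>' t\<bar>"
  have h_pos: "h > 0"
    using K by (simp add: h)
  have a_pos: "a > 0"
    using steep K unfolding a_def by (meson order.strict_trans2 real_sqrt_gt_zero)
  have "1 / 2 \<le> a * h"
    using steep h_pos K unfolding a_def h by (simp add: field_simps)
  then have inv_a: "1 / a \<le> 2 * h"
    using a_pos by (simp add: field_simps)
  note deriv_bounds = abs_deriv_bounds_near_steep[OF K h lip steep, folded a_def]
  show ?thesis
  proof (cases "\<delta> \<ge> 1")
    case True
    have "outer_measure_le {t-h..t+h} (2 * h)"
      using h_pos unfolding outer_measure_le_def by (intro bexI[of _ "{t-h..t+h}"]) auto
    then show ?thesis
      using True h_pos by (elim outer_measure_le_mono) auto
  next
    case False
    have "outer_measure_le {s \<in> {t-h..t+h}. dist_int (\<phi> s) < \<delta>}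
            ((2 * (3 * a / 2 * h) + 2 * \<delta> + 3) * (4 * \<delta> / (a / 2)))"
    proof (rule outer_measure_le_near_int[where y = "\<phi> t"])
      fix s s' assume "s \<in> {t-h..t+h}" "s' \<in> {t-h..t+h}"
      then show "a / 2 * \<bar>s - s'\<bar> \<le> \<bar>\<phi> s - \<phi> s'\<bar>"
        using abs_diff_bounds_by_deriv[where lo = "t-h" and hi = "t+h", OF der deriv_bounds] by blast
    next
      fix s assume s: "s \<in> {t-h..t+h}"
      then have "\<bar>\<phi> s - \<phi> t\<bar> \<le> 3 * a / 2 * \<bar>s - t\<bar>"
        using abs_diff_bounds_by_deriv[where lo = "t-h" and hi = "t+h", OF der deriv_bounds, of s t] h_pos by auto
      also have "\<dots> \<le> 3 * a / 2 * h"
        using s a_pos by (intro mult_left_mono) auto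
      finally show "\<bar>\<phi> s - \<phi> t\<bar> \<le> 3 * a / 2 * h" .
    qed (use a_pos h_pos \<delta> in auto)
    moreover have "(3 * a * h + 2 * \<delta> + 3) * (8 * \<delta> / a) \<le> 104 * \<delta> * h"
    proof -
      have "\<delta> * \<delta> \<le> \<delta>"
        using False \<delta> by (simp add: mult_le_cancel_left1)
      then have "(16 * (\<delta> * \<delta>) + 24 * \<delta>) * (1 / a) \<le> 40 * \<delta> * (2 * h)"
        using \<delta> a_pos inv_a by (intro mult_mono) auto
      then show ?thesis
        using a_pos by (simp add: field_simps)
    qed
    ultimately show ?thesis
      by (elim outer_measure_le_mono) (auto simp: field_simps)
  qed
qed

lemma outer_measure_le_local_to_global:
  fixes S :: "real set"
  assumes S: "S \<subseteq> {lo..hi}" and h: "h > 0" and b: "b \<ge> 0"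
    and local: "\<And>t. t \<in> S \<Longrightarrow> outer_measure_le (S \<inter> {t-h..t+h}) b"
  shows "outer_measure_le S (((hi - lo) / h + 1) * b)"
proof (cases "S = {}")
  case False
  then have lo_hi: "lo \<le> hi"
    using S by auto
  define N where "N = nat \<lfloor>(hi - lo) / h\<rfloor>"
  define J where "J m = {lo + real m * h .. lo + (real m + 1) * h}" for m :: nat
  have "S \<subseteq> (\<Union>m\<in>{0..N}. S \<inter> J m)"
  proof
    fix t assume t: "t \<in> S"
    define m where "m = nat \<lfloor>(t - lo) / h\<rfloor>"
    have "real m \<le> (t - lo) / h" "(t - lo) / h < real m + 1"
      using t S h unfolding m_def by auto
    then have "t \<in> J m"
      using h unfolding J_def by (auto simp: field_simps)
    moreover have "m \<le> N"
      using t S h unfolding m_def N_def by (auto intro!: nat_mono floor_mono divide_right_mono)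
    ultimately show "t \<in> (\<Union>m\<in>{0..N}. S \<inter> J m)"
      using t by auto
  qed
  moreover have "outer_measure_le (S \<inter> J m) b" for m
  proof (cases "S \<inter> J m = {}")
    case False
    then obtain t where t: "t \<in> S \<inter> J m" by auto
    have "S \<inter> J m \<subseteq> S \<inter> {t-h..t+h}"
      using t unfolding J_def by (auto simp: algebra_simps)
    then show ?thesis
      using local[of t] t b by (auto elim: outer_measure_le_mono)
  qed (simp add: outer_measure_le_empty)
  then have "outer_measure_le (\<Union>m\<in>{0..N}. S \<inter> J m) (real (card {0..N}) * b)"
    by (intro outer_measure_le_UN) auto
  moreover have "real (card {0..N}) \<le> (hi - lo) / h + 1"
    using lo_hi h unfolding N_def by simp
  ultimately show ?thesis
    using b by (meson mult_right_mono outer_measure_le_mono)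
qed (simp add: outer_measure_le_empty)

lemma emeasure_le_by_lines:
  fixes E :: "'a::euclidean_space set" and u :: 'a
  assumes E: "E \<in> sets borel" "E \<subseteq> ball c r" and r: "r > 0" and u: "norm u = 1"
    and lines: "\<And>x. outer_measure_le {t \<in> {-r..r}. x + t *\<^sub>R u \<in> E} B"
  shows "emeasure lborel E * ennreal (2 * r) \<le> ennreal B * emeasure lborel (ball c (2 * r))"
proof -
  have pair: "pair_sigma_finite (lborel::'a measure) (lborel::real measure)"
    by (simp add: pair_sigma_finite_def sigma_finite_lborel)
  have translate: "(\<integral>\<^sup>+x. indicator E (x + t *\<^sub>R u) \<partial>lborel) = emeasure lborel E" for t
  proof -
    have "(\<integral>\<^sup>+x. indicator E (t *\<^sub>R u + x) \<partial>lborel) = (\<integral>\<^sup>+y. indicator E y \<partial>distr lborel borel ((+) (t *\<^sub>R u)))"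
      using E by (subst nn_integral_distr) auto
    then show ?thesis
      using E by (simp add: lborel_distr_plus add.commute)
  qed
  have line_integral: "(\<integral>\<^sup>+t. indicator E (x + t *\<^sub>R u) * indicator {-r..r} t \<partial>lborel)
      \<le> ennreal B * indicator (ball c (2 * r)) x" for x
  proof (cases "x \<in> ball c (2 * r)")
    case True
    obtain W where W: "W \<in> sets lborel" "{t \<in> {-r..r}. x + t *\<^sub>R u \<in> E} \<subseteq> W" "emeasure lborel W \<le> ennreal B"
      using lines[of x] unfolding outer_measure_le_def by blast
    have "(\<integral>\<^sup>+t. indicator E (x + t *\<^sub>R u) * indicator {-r..r} t \<partial>lborel) \<le> (\<integral>\<^sup>+t. indicator W t \<partial>lborel)"
      using W(2) by (intro nn_integral_mono) (auto simp: indicator_def)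
    then show ?thesis
      using W True by simp
  next
    case False
    have "x + t *\<^sub>R u \<notin> E" if "t \<in> {-r..r}" for t
    proof
      assume "x + t *\<^sub>R u \<in> E"
      then have "dist c (x + t *\<^sub>R u) < r"
        using E(2) by auto
      moreover have "dist (x + t *\<^sub>R u) x \<le> r"
        using that u by (simp add: dist_norm abs_le_iff)
      ultimately show False
        using False dist_triangle[of c x "x + t *\<^sub>R u"] by simp
    qed
    then have "(\<lambda>t. indicator E (x + t *\<^sub>R u) * indicator {-r..r} t) = (\<lambda>_. 0 :: ennreal)"
      by (auto simp: indicator_def fun_eq_iff)
    then show ?thesis
      by simp
  qed
  have "emeasure lborel E * ennreal (2 * r) = (\<integral>\<^sup>+t. emeasure lborel E * indicator {-r..r} t \<partial>lborel)"
    using r by (subst nn_integral_cmult_indicator) auto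
  also have "\<dots> = (\<integral>\<^sup>+t. (\<integral>\<^sup>+x. indicator E (x + t *\<^sub>R u) * indicator {-r..r} t \<partial>lborel) \<partial>lborel)"
    using E by (simp add: nn_integral_multc translate)
  also have "\<dots> = (\<integral>\<^sup>+x. (\<integral>\<^sup>+t. indicator E (x + t *\<^sub>R u) * indicator {-r..r} t \<partial>lborel) \<partial>lborel)"
    by (rule pair_sigma_finite.Fubini'[OF pair]) (use E in measurable)
  also have "\<dots> \<le> (\<integral>\<^sup>+x. ennreal B * indicator (ball c (2 * r)) x \<partial>lborel)"
    by (intro nn_integral_mono line_integral)
  also have "\<dots> = ennreal B * emeasure lborel (ball c (2 * r))"
    by (rule nn_integral_cmult_indicator) simp
  finally show ?thesis .
qed

lemma emeasure_lborel_ball_double: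
  fixes c :: "'a::euclidean_space"
  assumes "r \<ge> 0"
  shows "emeasure lborel (ball c (2 * r)) = ennreal (2 ^ DIM('a)) * emeasure lborel (ball c r)"
  using emeasure_lebesgue_ball_conv_unit_ball[of "2 * r" c] emeasure_lebesgue_ball_conv_unit_ball[of r c] assms
  by (simp add: power_mult_distrib ennreal_mult mult.assoc)

lemma has_real_derivative_along_line_shift:
  fixes x u :: "'a::real_vector"
  assumes "((\<lambda>s. g (x + t *\<^sub>R u + s *\<^sub>R u)) has_real_derivative D) (at 0)"
  shows "((\<lambda>s. g (x + s *\<^sub>R u)) has_real_derivative D) (at t)"
proof -
  have "(\<lambda>s. g (x + (s + t) *\<^sub>R u)) = (\<lambda>s. g (x + t *\<^sub>R u + s *\<^sub>R u))"
    by (simp add: algebra_simps)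
  then show ?thesis
    using assms DERIV_shift[of "\<lambda>s. g (x + s *\<^sub>R u)" D 0 t] by simp
qed

lemma near_int_steep_set_borel:
  fixes g g' :: "'a::euclidean_space \<Rightarrow> real"
  assumes "open S" "continuous_on S g" "continuous_on S g'"
  shows "{x \<in> S. dist_int (g x) < \<delta> \<and> T \<le> \<bar>g' x\<bar>} \<in> sets borel"
proof -
  have [measurable]: "S \<in> sets borel"
    using assms(1) by simp
  have [measurable]: "(\<lambda>x. indicator S x *\<^sub>R g x) \<in> borel_measurable borel"
    using assms(2) by (intro borel_measurable_continuous_on_indicator) simp
  have [measurable]: "(\<lambda>x. indicator S x *\<^sub>R g' x) \<in> borel_measurable borel"
    using assms(3) by (intro borel_measurable_continuous_on_indicator) simp
  have "{x \<in> S. dist_int (g x) < \<delta> \<and> T \<le> \<bar>g' x\<bar>}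
      = S \<inter> {x. dist_int (indicator S x *\<^sub>R g x) < \<delta> \<and> T \<le> \<bar>indicator S x *\<^sub>R g' x\<bar>}"
    by (auto simp: indicator_def)
  also have "\<dots> \<in> sets borel"
    by measurable
  finally show ?thesis .
qed

lemma outer_measure_le_near_int_steep_line:
  fixes g g' g'' :: "'a::euclidean_space \<Rightarrow> real"
  assumes u: "norm u = 1" and r: "r > 0" and \<delta>: "\<delta> > 0" and K: "K > 0" and Kr: "1 \<le> 2 * r * sqrt K"
    and d1: "\<And>y. y \<in> ball c (2 * r) \<Longrightarrow> ((\<lambda>s. g (y + s *\<^sub>R u)) has_real_derivative g' y) (at 0)"
    and d2: "\<And>y. y \<in> ball c (2 * r) \<Longrightarrow> ((\<lambda>s. g' (y + s *\<^sub>R u)) has_real_derivative g'' y) (at 0)"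
    and bound: "\<And>y. y \<in> ball c (2 * r) \<Longrightarrow> \<bar>g'' y\<bar> \<le> K"
  shows "outer_measure_le
           {t \<in> {-r..r}. x + t *\<^sub>R u \<in> {y \<in> ball c r. dist_int (g y) < \<delta> \<and> sqrt K \<le> \<bar>g' y\<bar>}}
           (312 * \<delta> * r)"
    (is "outer_measure_le ?S _")
proof -
  define h where "h = 1 / (2 * sqrt K)"
  have h: "0 < h" "h \<le> r"
    using K r Kr by (auto simp: h_def field_simps)
  have "outer_measure_le (?S \<inter> {t-h..t+h}) (104 * \<delta> * h)" if t: "t \<in> ?S" for t
  proof -
    have near: "x + s *\<^sub>R u \<in> ball c (2 * r)" if "s \<in> {t-h..t+h}" for s
    proof -
      have "dist (x + t *\<^sub>R u) (x + s *\<^sub>R u) \<le> h"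
        using that u by (simp add: dist_norm abs_le_iff flip: scaleR_diff_left)
      then show ?thesis
        using t h dist_triangle[of c "x + s *\<^sub>R u" "x + t *\<^sub>R u"] by auto
    qed
    have der: "((\<lambda>s. g (x + s *\<^sub>R u)) has_real_derivative g' (x + s *\<^sub>R u)) (at s)"
      and der': "((\<lambda>s. g' (x + s *\<^sub>R u)) has_real_derivative g'' (x + s *\<^sub>R u)) (at s)"
      if "s \<in> {t-h..t+h}" for s
      using d1[OF near[OF that]] d2[OF near[OF that]] by (auto intro: has_real_derivative_along_line_shift)
    have lip: "\<bar>g' (x + s *\<^sub>R u) - g' (x + t *\<^sub>R u)\<bar> \<le> K * \<bar>s - t\<bar>" if "s \<in> {t-h..t+h}" for s
      using abs_diff_bounds_by_deriv[where lo = "t-h" and hi = "t+h" and m = 0 and M = K, OF der', of s t] bound[OF near] that h by auto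
    have "outer_measure_le {s \<in> {t-h..t+h}. dist_int (g (x + s *\<^sub>R u)) < \<delta>} (104 * \<delta> * h)"
      by (rule outer_measure_le_near_int_local[OF K h_def \<delta> der lip]) (use t in auto)
    then show ?thesis
      by (elim outer_measure_le_mono) auto
  qed
  then have "outer_measure_le ?S (((r - - r) / h + 1) * (104 * \<delta> * h))"
    using h \<delta> by (intro outer_measure_le_local_to_global) auto
  moreover have "((r - - r) / h + 1) * (104 * \<delta> * h) \<le> 312 * \<delta> * r"
    using h \<delta> by (simp add: field_simps)
  ultimately show ?thesis
    by (elim outer_measure_le_mono) auto
qed

lemma emeasure_near_int_steep_direction:
  fixes g g' g'' :: "'a::euclidean_space \<Rightarrow> real"
  assumes u: "norm u = 1" and r: "r > 0" and \<delta>: "\<delta> > 0" and K: "K > 0" and Kr: "1 \<le> 2 * r * sqrt K"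
    and cont: "continuous_on (ball c r) g" "continuous_on (ball c r) g'"
    and d1: "\<And>y. y \<in> ball c (2 * r) \<Longrightarrow> ((\<lambda>s. g (y + s *\<^sub>R u)) has_real_derivative g' y) (at 0)"
    and d2: "\<And>y. y \<in> ball c (2 * r) \<Longrightarrow> ((\<lambda>s. g' (y + s *\<^sub>R u)) has_real_derivative g'' y) (at 0)"
    and bound: "\<And>y. y \<in> ball c (2 * r) \<Longrightarrow> \<bar>g'' y\<bar> \<le> K"
  shows "emeasure lborel {y \<in> ball c r. dist_int (g y) < \<delta> \<and> sqrt K \<le> \<bar>g' y\<bar>}
           \<le> ennreal (156 * 2 ^ DIM('a) * \<delta>) * emeasure lborel (ball c r)"
    (is "emeasure lborel ?E \<le> _")
proof -
  have "emeasure lborel ?E * ennreal (2 * r) \<le> ennreal (312 * \<delta> * r) * emeasure lborel (ball c (2 * r))"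
    by (rule emeasure_le_by_lines[OF near_int_steep_set_borel[OF open_ball cont] _ r u
          outer_measure_le_near_int_steep_line[OF u r \<delta> K Kr d1 d2 bound]]) auto
  then have "ennreal (2 * r) * emeasure lborel ?E \<le> ennreal (312 * \<delta> * r) * emeasure lborel (ball c (2 * r))"
    by (simp add: mult.commute)
  also have "\<dots> = ennreal (2 * r) * (ennreal (156 * 2 ^ DIM('a) * \<delta>) * emeasure lborel (ball c r))"
  proof -
    have "ennreal (312 * \<delta> * r) * ennreal (2 ^ DIM('a)) = ennreal (2 * r) * ennreal (156 * 2 ^ DIM('a) * \<delta>)"
      using r \<delta> by (simp add: ennreal_mult'[symmetric] algebra_simps)
    then show ?thesis
      using r by (simp add: emeasure_lborel_ball_double mult.assoc[symmetric])
  qed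
  finally show ?thesis
    using r by (simp add: ennreal_mult_le_mult_iff)
qed

lemma emeasure_near_int_steep_gradient:
  fixes g :: "real^'d \<Rightarrow> real" and g' g'' :: "'d \<Rightarrow> real^'d \<Rightarrow> real"
  assumes r: "r > 0" and \<delta>: "\<delta> > 0" and K: "K > 0" and Kr: "1 \<le> 2 * r * sqrt K" and T: "sqrt K \<le> T"
    and cont: "continuous_on (ball c r) g" "\<And>j. continuous_on (ball c r) (g' j)"
    and d1: "\<And>j y. y \<in> ball c (2 * r) \<Longrightarrow> ((\<lambda>s. g (y + s *\<^sub>R axis j 1)) has_real_derivative g' j y) (at 0)"
    and d2: "\<And>j y. y \<in> ball c (2 * r) \<Longrightarrow> ((\<lambda>s. g' j (y + s *\<^sub>R axis j 1)) has_real_derivative g'' j y) (at 0)"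
    and bound: "\<And>j y. y \<in> ball c (2 * r) \<Longrightarrow> \<bar>g'' j y\<bar> \<le> K"
  shows "emeasure lebesgue {y \<in> ball c r. dist_int (g y) < \<delta> \<and> T \<le> Max (range (\<lambda>j. \<bar>g' j y\<bar>))}
           \<le> ennreal (real CARD('d) * 156 * 2 ^ CARD('d) * \<delta>) * emeasure lebesgue (ball c r)"
proof -
  define E where "E j = {y \<in> ball c r. dist_int (g y) < \<delta> \<and> sqrt K \<le> \<bar>g' j y\<bar>}" for j
  have E_borel: "E j \<in> sets borel" for j
    unfolding E_def using cont by (intro near_int_steep_set_borel) auto
  have "{y \<in> ball c r. dist_int (g y) < \<delta> \<and> T \<le> Max (range (\<lambda>j. \<bar>g' j y\<bar>))} \<subseteq> (\<Union>j. E j)"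
  proof clarify
    fix y assume "y \<in> ball c r" "dist_int (g y) < \<delta>" "T \<le> Max (range (\<lambda>j. \<bar>g' j y\<bar>))"
    moreover have "Max (range (\<lambda>j. \<bar>g' j y\<bar>)) \<in> range (\<lambda>j. \<bar>g' j y\<bar>)"
      by (rule Max_in) auto
    then obtain j where "Max (range (\<lambda>j. \<bar>g' j y\<bar>)) = \<bar>g' j y\<bar>"
      by blast
    ultimately have "y \<in> E j"
      using T unfolding E_def by auto
    then show "y \<in> (\<Union>j. E j)"
      by blast
  qed
  then have "emeasure lebesgue {y \<in> ball c r. dist_int (g y) < \<delta> \<and> T \<le> Max (range (\<lambda>j. \<bar>g' j y\<bar>))}
      \<le> emeasure lebesgue (\<Union>j. E j)"
    using E_borel by (intro emeasure_mono) auto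
  also have "\<dots> = emeasure lborel (\<Union>j. E j)"
    using E_borel by simp
  also have "\<dots> \<le> (\<Sum>j\<in>UNIV. emeasure lborel (E j))"
    using E_borel by (intro emeasure_subadditive_finite) auto
  also have "\<dots> \<le> (\<Sum>j\<in>(UNIV::'d set). ennreal (156 * 2 ^ CARD('d) * \<delta>) * emeasure lborel (ball c r))"
  proof (intro sum_mono)
    fix j
    show "emeasure lborel (E j) \<le> ennreal (156 * 2 ^ CARD('d) * \<delta>) * emeasure lborel (ball c r)"
      using emeasure_near_int_steep_direction[OF norm_axis_1 r \<delta> K Kr cont(1) cont(2)[of j] d1[where j = j] d2[where j = j] bound[where j = j]]
      by (simp add: E_def)
  qed
  also have "\<dots> = ennreal (real CARD('d) * 156 * 2 ^ CARD('d) * \<delta>) * emeasure lebesgue (ball c r)"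
    using \<delta> by (simp add: ennreal_of_nat_eq_real_of_nat ennreal_mult' mult.assoc)
  finally show ?thesis .
qed

lemma has_real_derivative_partial:
  fixes h :: "real^'d \<Rightarrow> real"
  assumes "h differentiable (at y)"
  shows "((\<lambda>s. h (y + s *\<^sub>R axis j 1)) has_real_derivative partial j h y) (at 0)"
proof -
  let ?D = "frechet_derivative h (at y)"
  have line: "((\<lambda>s. y + s *\<^sub>R axis j 1) has_derivative (\<lambda>s. s *\<^sub>R axis j 1)) (at 0)"
    by (auto intro!: derivative_eq_intros)
  have "(h has_derivative ?D) (at ((\<lambda>s. y + s *\<^sub>R axis j 1) 0))"
    using assms by (simp add: frechet_derivative_works)
  from diff_chain_at[OF line this]
  have "((\<lambda>s. h (y + s *\<^sub>R axis j 1)) has_derivative (\<lambda>s. ?D (s *\<^sub>R axis j 1))) (at 0)"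
    by (simp add: o_def)
  moreover have "?D (s *\<^sub>R axis j 1) = partial j h y * s" for s
    using assms linear.scaleR[of ?D s "axis j 1"]
    by (simp add: partial_def has_derivative_linear frechet_derivative_works)
  ultimately show ?thesis
    by (simp add: has_field_derivative_def)
qed

lemma emeasure_near_int_steep_C2:
  fixes f :: "nat \<Rightarrow> real^'d \<Rightarrow> real" and q :: "nat \<Rightarrow> int"
  assumes r: "r > 0" and \<delta>: "\<delta> > 0" and K: "K > 0" and Kr: "1 \<le> 2 * r * sqrt K" and T: "sqrt K \<le> T"
    and C2: "\<forall>i<n. C2_on (ball c (2 * r)) (f i)"
    and second: "\<And>j y. y \<in> ball c (2 * r) \<Longrightarrow>
                   \<bar>\<Sum>i<n. real_of_int (q i) * partial j (partial j (f i)) y\<bar> \<le> K"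
  shows "emeasure lebesgue {x \<in> ball c r. dist_int (\<Sum>i<n. real_of_int (q i) * f i x) < \<delta> \<and>
                                           T \<le> grad_norm n f q x}
           \<le> ennreal (real CARD('d) * 156 * 2 ^ CARD('d) * \<delta>) * emeasure lebesgue (ball c r)"
proof -
  have diff: "f i differentiable (at y)" "partial j (f i) differentiable (at y)"
    if "i < n" "y \<in> ball c (2 * r)" for i j y
    using C2 that unfolding C2_on_def by blast+
  have "continuous_on (ball c r) (\<lambda>y. \<Sum>i<n. real_of_int (q i) * f i y)"
    and "continuous_on (ball c r) (\<lambda>y. \<Sum>i<n. real_of_int (q i) * partial j (f i) y)" for j
    using diff r
    by (intro continuous_at_imp_continuous_on ballI continuous_intros differentiable_imp_continuous_within; force)+
  moreover have
    "((\<lambda>s. \<Sum>i<n. real_of_int (q i) * f i (y + s *\<^sub>R axis j 1)) has_real_derivative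
        (\<Sum>i<n. real_of_int (q i) * partial j (f i) y)) (at 0)"
    and "((\<lambda>s. \<Sum>i<n. real_of_int (q i) * partial j (f i) (y + s *\<^sub>R axis j 1)) has_real_derivative
        (\<Sum>i<n. real_of_int (q i) * partial j (partial j (f i)) y)) (at 0)"
    if "y \<in> ball c (2 * r)" for j y
    using diff that by (intro DERIV_sum DERIV_cmult has_real_derivative_partial; simp)+
  ultimately show ?thesis
    unfolding grad_norm_def using second by (intro emeasure_near_int_steep_gradient[OF r \<delta> K Kr T]) auto
qed

lemma abs_le_qnorm: "i < n \<Longrightarrow> \<bar>real_of_int (q i)\<bar> \<le> qnorm n q"
  unfolding qnorm_def by (intro Max_ge) auto

lemma abs_sum_mult_le:
  fixes a b :: "'i \<Rightarrow> real"
  assumes "\<And>i. i \<in> I \<Longrightarrow> \<bar>a i\<bar> \<le> A" and "\<And>i. i \<in> I \<Longrightarrow> \<bar>b i\<bar> \<le> B"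
  shows "\<bar>\<Sum>i\<in>I. a i * b i\<bar> \<le> real (card I) * A * B"
proof -
  have "\<bar>\<Sum>i\<in>I. a i * b i\<bar> \<le> (\<Sum>i\<in>I. \<bar>a i\<bar> * \<bar>b i\<bar>)"
    using sum_abs[of "\<lambda>i. a i * b i" I] by (simp add: abs_mult)
  also have "\<dots> \<le> (\<Sum>i\<in>I. A * B)"
    using assms by (intro sum_mono mult_mono) (auto intro: order_trans[OF abs_ge_zero])
  finally show ?thesis
    by simp
qed

lemma abs_sum_second_partial_le:
  fixes f :: "nat \<Rightarrow> real^'d \<Rightarrow> real"
  assumes bdd: "bdd_above {\<bar>partial k (partial j (f i)) x\<bar> | x i j k. x \<in> S \<and> i < n}" and y: "y \<in> S"
  shows "\<bar>\<Sum>i<n. real_of_int (q i) * partial j (partial j (f i)) y\<bar>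
           \<le> real n * Sup {\<bar>partial k (partial j (f i)) x\<bar> | x i j k. x \<in> S \<and> i < n} * qnorm n q"
proof -
  have "\<bar>partial j (partial j (f i)) y\<bar> \<le> Sup {\<bar>partial k (partial j (f i)) x\<bar> | x i j k. x \<in> S \<and> i < n}"
    if "i < n" for i
    using that y by (intro cSup_upper[OF _ bdd]) auto
  then have "\<bar>\<Sum>i<n. real_of_int (q i) * partial j (partial j (f i)) y\<bar>
      \<le> real (card {..<n}) * qnorm n q * Sup {\<bar>partial k (partial j (f i)) x\<bar> | x i j k. x \<in> S \<and> i < n}"
    by (intro abs_sum_mult_le abs_le_qnorm) auto
  then show ?thesis
    by (simp add: mult_ac)
qed

theorem theorem1p3:
  shows "\<exists>C::real. \<forall>(n::nat) (c::real^'d::finite) (r::real) (f::nat \<Rightarrow> real^'d \<Rightarrow> real)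
           (\<delta>::real) (L::real) (q::nat \<Rightarrow> int).
     n \<ge> 1 \<and> r > 0 \<and> \<delta> > 0 \<and>
     (\<forall>i<n. C2_on (ball c (2*r)) (f i)) \<and>
     bdd_above {\<bar>partial k (partial j (f i)) x\<bar> | x i j k. x \<in> ball c (2*r) \<and> i < n} \<and>
     L = Sup {\<bar>partial k (partial j (f i)) x\<bar> | x i j k. x \<in> ball c (2*r) \<and> i < n} \<and>
     L > 0 \<and>
     qnorm n q \<ge> 1 / (4 * real n * L * r\<^sup>2)
     \<longrightarrow>
     emeasure lebesgue
       {x \<in> ball c r. dist_int (\<Sum>i<n. real_of_int (q i) * f i x) < \<delta> \<and>
                      grad_norm n f q x \<ge> sqrt (real n * real CARD('d) * L * qnorm n q)}
       \<le> ennreal (C * \<delta>) * emeasure lebesgue (ball c r)"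
proof (intro exI[of _ "real CARD('d) * 156 * 2 ^ CARD('d)"] allI impI, elim conjE)
  fix n :: nat and c :: "real^'d" and r \<delta> L :: real and f :: "nat \<Rightarrow> real^'d \<Rightarrow> real" and q :: "nat \<Rightarrow> int"
  let ?A = "{\<bar>partial k (partial j (f i)) x\<bar> | x i j k. x \<in> ball c (2*r) \<and> i < n}"
  assume n: "n \<ge> 1" and r: "r > 0" and \<delta>: "\<delta> > 0" and C2: "\<forall>i<n. C2_on (ball c (2*r)) (f i)"
    and bdd: "bdd_above ?A" and L_def: "L = Sup ?A" and L: "L > 0"
    and q: "qnorm n q \<ge> 1 / (4 * real n * L * r\<^sup>2)"
  define K where "K = real n * L * qnorm n q"
  have "0 < 1 / (4 * real n * L * r\<^sup>2)"
    using n L r by simp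
  then have "qnorm n q > 0"
    using q by linarith
  then have K: "K > 0"
    using n L by (simp add: K_def)
  have "1 \<le> 4 * r\<^sup>2 * K"
    using q n L r by (simp add: K_def pos_divide_le_eq mult_ac)
  also have "\<dots> = (2 * r * sqrt K)\<^sup>2"
    using K by (simp add: power_mult_distrib)
  finally have Kr: "1 \<le> 2 * r * sqrt K"
    by (rule power2_le_imp_le[of 1, unfolded one_power2]) (use r K in auto)
  have second: "\<bar>\<Sum>i<n. real_of_int (q i) * partial j (partial j (f i)) y\<bar> \<le> K"
    if "y \<in> ball c (2*r)" for j y
    unfolding K_def L_def by (rule abs_sum_second_partial_le[OF bdd that])
  have "sqrt K \<le> sqrt (real n * real CARD('d) * L * qnorm n q)"
  proof -
    have "K \<le> real CARD('d) * K"
      using K by (simp add: Suc_le_eq)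
    then show ?thesis
      by (simp add: K_def mult_ac)
  qed
  then show "emeasure lebesgue {x \<in> ball c r. dist_int (\<Sum>i<n. real_of_int (q i) * f i x) < \<delta> \<and>
                      grad_norm n f q x \<ge> sqrt (real n * real CARD('d) * L * qnorm n q)}
       \<le> ennreal (real CARD('d) * 156 * 2 ^ CARD('d) * \<delta>) * emeasure lebesgue (ball c r)"
    by (rule emeasure_near_int_steep_C2[OF r \<delta> K Kr _ C2 second])
qed

end
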